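(* Let $\lambda,\alpha_1,\alpha_2\in\mathbb{C}^*$ and $h_1=\xi_1t+\eta_1$, $h_2=\xi_2t+\eta_2\in\mathbb{C}[t]$ with $\alpha_1\xi_1=\alpha_2\xi_2\neq 0$. Define complex numbers $b_i$ ($i\in\mathbb{Z}_+$) by $b_0=1$, $b_1=0$, $b_{i+1}=ib_i+i(\eta_2-\eta_1)b_{i-1}$ for $i\in\mathbb{N}$, and polynomials $g_n(x)=\sum_{i=0}^n\binom{n}{i}b_{n-i}x^i$ for $n\in\mathbb{Z}_+$. Let $\phi:\Omega(\lambda,\alpha_1,h_1)\to\Omega(\lambda,\alpha_2,h_2)$ be the linear map with $\phi(s^ih_1^n)=s^ig_n(h_2)$ for all $n,i\in\mathbb{Z}_+$ (here $\{s^ih_1^n\}$ is a basis of $\mathbb{C}[t,s]$). Then $\phi$ is an isomorphism of $\mathrm{Vir}$-modules.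
   Context: $\mathrm{Vir}$ is the Lie algebra with basis $\{d_i,c\mid i\in\mathbb{Z}\}$ and brackets $[d_i,d_j]=(j-i)d_{i+j}+\delta_{i,-j}\frac{i^3-i}{12}c$, $[c,d_i]=0$. For $\lambda\in\mathbb{C}^*$, $\alpha\in\mathbb{C}$, $h\in\mathbb{C}[t]$, define operators on $\mathbb{C}[t]$ by $F(f)=\frac{h(t)-h(\alpha)}{t-\alpha}f(t)-f'(t)$ and $G(f)=h(\alpha)f+tF(f)$. The $\mathrm{Vir}$-module $\Omega(\lambda,\alpha,h)$ is the vector space $\mathbb{C}[t,s]$ with $c$ acting as $0$ and $d_m(f(t)s^i)=\lambda^m(s-m)^i\big(sf+mG(f)-m^2\alpha F(f)\big)$ for $m\in\mathbb{Z}$, $i\in\mathbb{Z}_+$, $f\in\mathbb{C}[t]$. *)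

theory Defs
  imports "HOL-Computational_Algebra.Polynomial"
begin

text \<open>C[t,s] is modelled as complex poly poly: polynomials in s whose
coefficients are polynomials in t. The element f(t) s^i is monom f i.\<close>

definition opF :: "complex \<Rightarrow> complex poly \<Rightarrow> complex poly \<Rightarrow> complex poly" where
  "opF \<alpha> h f = ((h - [:poly h \<alpha>:]) div [:- \<alpha>, 1:]) * f - pderiv f"

definition opG :: "complex \<Rightarrow> complex poly \<Rightarrow> complex poly \<Rightarrow> complex poly" where
  "opG \<alpha> h f = smult (poly h \<alpha>) f + [:0, 1:] * opF \<alpha> h f"

text \<open>Action of d_m on f(t) s^i in Omega(lambda, alpha, h).\<close>
definition omega_mono :: "complex \<Rightarrow> complex \<Rightarrow> complex poly \<Rightarrow> int \<Rightarrow> complex poly \<Rightarrow> nat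
    \<Rightarrow> complex poly poly" where
  "omega_mono lam \<alpha> h m f i =
     smult [:lam powi m:]
       ((pCons (- [:of_int m:]) 1) ^ i *
        pCons (smult (of_int m) (opG \<alpha> h f) - smult (of_int m ^ 2 * \<alpha>) (opF \<alpha> h f)) [:f:])"

definition omega_act :: "complex \<Rightarrow> complex \<Rightarrow> complex poly \<Rightarrow> int \<Rightarrow> complex poly poly
    \<Rightarrow> complex poly poly" where
  "omega_act lam \<alpha> h m P = (\<Sum>i\<le>degree P. omega_mono lam \<alpha> h m (coeff P i) i)"

text \<open>The sequence b_i with parameter e = eta2 - eta1.\<close>
fun bseq :: "complex \<Rightarrow> nat \<Rightarrow> complex" where
  "bseq e 0 = 1"
| "bseq e (Suc 0) = 0"
| "bseq e (Suc (Suc i)) = of_nat (Suc i) * bseq e (Suc i) + of_nat (Suc i) * e * bseq e i"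

definition gpoly :: "complex \<Rightarrow> nat \<Rightarrow> complex poly \<Rightarrow> complex poly" where
  "gpoly e n x = (\<Sum>i\<le>n. smult (of_nat (n choose i) * bseq e (n - i)) (x ^ i))"

end

theory Submission
  imports Defs
begin

text \<open>The map \<phi> acts on each coefficient of s by one linear map \<psi> of C[t] with
\<psi>(h1^n) = g_n(h2), so everything reduces to \<psi>. In the coordinate u = h(t) of a linear
h = \<xi> t + \<eta>, the operators become F = \<xi>(1 - d/du) and G = \<alpha>\<xi> + u(1 - d/du) + \<eta> d/du.
The g_n form an Appell sequence, g_n' = n g_(n-1), and satisfy
g_(n+1) = (x + n) g_n - n (x - e) g_(n-1) with e = \<eta>2 - \<eta>1; the plain powers are the case
e = 0. Hence \<alpha> F and G act on the basis g_n(h2) by the same formulas as on h1^n, because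
\<alpha>1 \<xi>1 = \<alpha>2 \<xi>2 and \<eta>2 - e = \<eta>1. Finally \<psi> maps polynomials of degree n to polynomials of
degree n with nonzero leading coefficient, so it is bijective.\<close>

lemma pcompose_power_left: "pcompose (p ^ n) q = pcompose p q ^ n"
  by (induction n) (simp_all add: pcompose_mult pcompose_1)

lemma poly_as_sum_of_linear_powers:
  fixes f :: "'a::field poly"
  assumes "\<xi> \<noteq> 0"
  shows "f = (\<Sum>n\<le>degree f. smult (coeff (pcompose f [:- \<eta> / \<xi>, 1 / \<xi>:]) n) ([:\<eta>, \<xi>:] ^ n))"
proof -
  define F where "F = pcompose f [:- \<eta> / \<xi>, 1 / \<xi>:]"
  have "pcompose [:- \<eta> / \<xi>, 1 / \<xi>:] [:\<eta>, \<xi>:] = [:0, 1:]"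
    using assms by (simp add: pcompose_pCons field_simps)
  then have "f = pcompose F [:\<eta>, \<xi>:]"
    unfolding F_def pcompose_assoc[symmetric] by simp
  also have "\<dots> = pcompose (\<Sum>i\<le>degree F. monom (coeff F i) i) [:\<eta>, \<xi>:]"
    by (simp add: poly_as_sum_of_monoms)
  also have "\<dots> = (\<Sum>n\<le>degree F. smult (coeff F n) ([:\<eta>, \<xi>:] ^ n))"
    by (simp add: pcompose_sum monom_altdef pcompose_smult pcompose_power_left pcompose_pCons)
  also have "degree F = degree f"
    unfolding F_def using assms by (simp add: degree_pcompose)
  finally show ?thesis unfolding F_def .
qed

lemma additive_sum:
  fixes L :: "'a::comm_monoid_add \<Rightarrow> 'b::cancel_comm_monoid_add"
  assumes "\<And>a b. L (a + b) = L a + L b"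
  shows "L (sum g A) = (\<Sum>x\<in>A. L (g x))"
proof -
  have "L 0 = 0" using assms[of 0 0] by simp
  with assms show ?thesis by (induction A rule: infinite_finite_induct) simp_all
qed

lemma linear_maps_eq_on_linear_powers:
  fixes L M :: "'a::field poly \<Rightarrow> 'a poly"
  assumes "\<xi> \<noteq> 0"
    and "\<And>f g. L (f + g) = L f + L g" and "\<And>c f. L (smult c f) = smult c (L f)"
    and "\<And>f g. M (f + g) = M f + M g" and "\<And>c f. M (smult c f) = smult c (M f)"
    and "\<And>n. L ([:\<eta>, \<xi>:] ^ n) = M ([:\<eta>, \<xi>:] ^ n)"
  shows "L f = M f"
  using assms poly_as_sum_of_linear_powers[OF assms(1), of f \<eta>]
  by (metis (no_types, lifting) additive_sum sum.cong)

lemma monom_smult_const: "monom (smult c p) i = smult [:c:] (monom p i)"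
  by (rule poly_eqI) (simp add: coeff_monom)

lemma bij_map_poly:
  assumes "bij f" and "f 0 = 0"
  shows "bij (map_poly f)"
proof (rule o_bij)
  have "inv f 0 = 0" using assms by (metis bij_is_inj inv_f_f)
  moreover have "inv f \<circ> f = id" and "f \<circ> inv f = id"
    using assms by (simp_all add: bij_is_inj bij_is_surj inv_o_cancel surj_iff[symmetric])
  ultimately show "map_poly (inv f) \<circ> map_poly f = id" and "map_poly f \<circ> map_poly (inv f) = id"
    using assms by (auto intro!: ext simp: map_poly_map_poly)
qed

abbreviation gpolyX :: "complex \<Rightarrow> nat \<Rightarrow> complex poly" where
  "gpolyX e n \<equiv> gpoly e n [:0, 1:]"

lemma coeff_gpolyX:
  "coeff (gpolyX e n) i = (if i \<le> n then of_nat (n choose i) * bseq e (n - i) else 0)"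
  unfolding gpoly_def by (simp add: coeff_sum monom_altdef[symmetric] coeff_monom)

lemma gpoly_0_index [simp]: "gpoly e 0 q = 1"
  by (simp add: gpoly_def)

lemma gpoly_eq_pcompose: "gpoly e n q = pcompose (gpolyX e n) q"
  unfolding gpoly_def
  by (simp add: pcompose_sum pcompose_smult pcompose_pCons pcompose_power_left)

lemma degree_gpolyX: "degree (gpolyX e n) = n"
  by (rule antisym) (auto intro!: degree_le le_degree simp: coeff_gpolyX)

lemma poly_gpolyX_0: "poly (gpolyX e n) 0 = bseq e n"
  by (simp add: poly_0_coeff_0 coeff_gpolyX)

lemma gpolyX_1: "gpolyX e 1 = [:0, 1:]"
  by (rule poly_eqI) (auto simp add: coeff_gpolyX coeff_pCons split: nat.split)

lemma pderiv_gpolyX: "pderiv (gpolyX e n) = smult (of_nat n) (gpolyX e (n - 1))"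
proof (cases n)
  case (Suc m)
  have "of_nat (Suc i) * (of_nat (Suc m choose Suc i) :: complex) = of_nat (Suc m) * of_nat (m choose i)" for i
    using Suc_times_binomial_eq[of m i] by (metis mult.commute of_nat_mult)
  then show ?thesis
    unfolding Suc by (intro poly_eqI) (simp add: coeff_pderiv coeff_gpolyX mult.assoc[symmetric])
qed simp

lemma gpolyX_recurrence:
  "gpolyX e (Suc n) = [:of_nat n, 1:] * gpolyX e n - smult (of_nat n) ([:- e, 1:] * gpolyX e (n - 1))"
proof -
  define R where "R n = gpolyX e (Suc n) - [:of_nat n, 1:] * gpolyX e n
                        + smult (of_nat n) ([:- e, 1:] * gpolyX e (n - 1))" for n
  have pderiv_R: "pderiv (R (Suc n)) = smult (of_nat (Suc n)) (R n)" for n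
  proof (rule poly_ext)
    fix y
    show "poly (pderiv (R (Suc n))) y = poly (smult (of_nat (Suc n)) (R n)) y"
      unfolding R_def by (simp add: pderiv_gpolyX pderiv_mult pderiv_pCons pderiv_smult
          pderiv_add pderiv_diff algebra_simps)
  qed
  have R_at_0: "poly (R n) 0 = 0" for n
    by (cases "(e, n)" rule: bseq.cases) (simp_all add: R_def poly_gpolyX_0 algebra_simps)
  have "R n = 0" for n
  proof (induction n)
    case 0
    show ?case using gpolyX_1[of e] by (simp add: R_def)
  next
    case (Suc n)
    then have "pderiv (R (Suc n)) = 0" by (simp add: pderiv_R)
    then obtain c where "R (Suc n) = [:c:]" using pderiv_iszero by blast
    with R_at_0[of "Suc n"] show ?case by simp
  qed
  then show ?thesis by (simp add: R_def algebra_simps)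
qed

lemma opF_linear: "opF \<alpha> [:\<eta>, \<xi>:] f = smult \<xi> f - pderiv f"
proof -
  have "[:\<eta>, \<xi>:] - [:poly [:\<eta>, \<xi>:] \<alpha>:] = [:\<xi>:] * [:- \<alpha>, 1:]" by simp
  then have "([:\<eta>, \<xi>:] - [:poly [:\<eta>, \<xi>:] \<alpha>:]) div [:- \<alpha>, 1:] = [:\<xi>:]"
    by (metis nonzero_mult_div_cancel_right pCons_eq_0_iff zero_neq_one)
  then show ?thesis unfolding opF_def by simp
qed

lemma opF_add: "opF \<alpha> h (f + g) = opF \<alpha> h f + opF \<alpha> h g"
  unfolding opF_def by (simp add: algebra_simps pderiv_add)

lemma opF_smult: "opF \<alpha> h (smult c f) = smult c (opF \<alpha> h f)"
  unfolding opF_def by (simp add: smult_diff_right pderiv_smult mult_smult_right)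

lemma opG_add: "opG \<alpha> h (f + g) = opG \<alpha> h f + opG \<alpha> h g"
  unfolding opG_def by (simp add: opF_add smult_add_right distrib_left)

lemma opG_smult: "opG \<alpha> h (smult c f) = smult c (opG \<alpha> h f)"
  unfolding opG_def by (simp add: opF_smult smult_add_right mult_smult_right mult.commute)

lemma opF_pcompose_linear:
  "opF \<alpha> [:\<eta>, \<xi>:] (pcompose p [:\<eta>, \<xi>:]) = smult \<xi> (pcompose (p - pderiv p) [:\<eta>, \<xi>:])"
  by (simp add: opF_linear pderiv_pcompose pderiv_pCons pcompose_diff smult_diff_right mult.commute)

lemma opG_pcompose_linear:
  "opG \<alpha> [:\<eta>, \<xi>:] (pcompose p [:\<eta>, \<xi>:])
     = pcompose (smult (\<alpha> * \<xi>) p + [:0, 1:] * (p - pderiv p) + smult \<eta> (pderiv p)) [:\<eta>, \<xi>:]"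
  by (rule poly_ext)
     (simp add: opG_def opF_pcompose_linear poly_pcompose algebra_simps)

lemma bseq_0_param: "bseq 0 n = (if n = 0 then 1 else 0)"
  by (induction "0::complex" n rule: bseq.induct) simp_all

lemma gpoly_0_param: "gpoly 0 n q = q ^ n"
proof -
  have "gpoly 0 n q = (\<Sum>i\<le>n. if i = n then q ^ n else 0)"
    unfolding gpoly_def by (rule sum.cong) (auto simp: bseq_0_param)
  then show ?thesis by simp
qed

lemma opF_gpoly_linear:
  "smult \<alpha> (opF \<alpha> [:\<eta>, \<xi>:] (gpoly e n [:\<eta>, \<xi>:]))
     = smult (\<alpha> * \<xi>) (gpoly e n [:\<eta>, \<xi>:] - smult (of_nat n) (gpoly e (n - 1) [:\<eta>, \<xi>:]))"
  by (simp add: gpoly_eq_pcompose[of e _ "[:\<eta>, \<xi>:]"] opF_pcompose_linear pderiv_gpolyX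
      pcompose_diff pcompose_smult)

lemma opG_gpoly_linear:
  "opG \<alpha> [:\<eta>, \<xi>:] (gpoly e n [:\<eta>, \<xi>:])
     = gpoly e (Suc n) [:\<eta>, \<xi>:] + smult (\<alpha> * \<xi> - of_nat n) (gpoly e n [:\<eta>, \<xi>:])
       + smult (of_nat n * (\<eta> - e)) (gpoly e (n - 1) [:\<eta>, \<xi>:])"
proof -
  have "smult (\<alpha> * \<xi>) (gpolyX e n) + [:0, 1:] * (gpolyX e n - pderiv (gpolyX e n))
          + smult \<eta> (pderiv (gpolyX e n))
        = gpolyX e (Suc n) + smult (\<alpha> * \<xi> - of_nat n) (gpolyX e n)
          + smult (of_nat n * (\<eta> - e)) (gpolyX e (n - 1))"
    by (rule poly_ext) (simp add: gpolyX_recurrence[of e n] pderiv_gpolyX algebra_simps)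
  then show ?thesis
    by (simp add: gpoly_eq_pcompose[of e _ "[:\<eta>, \<xi>:]"] opG_pcompose_linear
        pcompose_add pcompose_smult)
qed

lemma degree_gpoly_linear: "\<xi> \<noteq> 0 \<Longrightarrow> degree (gpoly e n [:\<eta>, \<xi>:]) = n"
  by (simp add: gpoly_eq_pcompose[of e n "[:\<eta>, \<xi>:]"] degree_pcompose degree_gpolyX)

lemma lead_coeff_gpoly_linear: "\<xi> \<noteq> 0 \<Longrightarrow> coeff (gpoly e n [:\<eta>, \<xi>:]) n = \<xi> ^ n"
  using lead_coeff_comp[of "[:\<eta>, \<xi>:]" "gpolyX e n"]
  by (simp add: gpoly_eq_pcompose[of e n "[:\<eta>, \<xi>:]"] degree_pcompose degree_gpolyX coeff_gpolyX)

context
  fixes \<phi> :: "complex poly poly \<Rightarrow> complex poly poly" and \<eta>1 \<xi>1 \<eta>2 \<xi>2 :: complex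
  assumes phi_add: "\<And>P Q. \<phi> (P + Q) = \<phi> P + \<phi> Q"
    and phi_smult: "\<And>c P. \<phi> (smult [:c:] P) = smult [:c:] (\<phi> P)"
    and phi_basis: "\<And>n i. \<phi> (monom ([:\<eta>1, \<xi>1:] ^ n) i) = monom (gpoly (\<eta>2 - \<eta>1) n [:\<eta>2, \<xi>2:]) i"
    and \<xi>1_nonzero: "\<xi>1 \<noteq> 0" and \<xi>2_nonzero: "\<xi>2 \<noteq> 0"
begin

lemma phi_sum: "\<phi> (sum g A) = (\<Sum>x\<in>A. \<phi> (g x))"
  by (rule additive_sum[OF phi_add])

lemma phi_monom_exists: "\<exists>q. \<forall>i. \<phi> (monom f i) = monom q i"
proof -
  define c where "c n = coeff (pcompose f [:- \<eta>1 / \<xi>1, 1 / \<xi>1:]) n" for n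
  define q where "q = (\<Sum>n\<le>degree f. smult (c n) (gpoly (\<eta>2 - \<eta>1) n [:\<eta>2, \<xi>2:]))"
  have "\<phi> (monom f i) = monom q i" for i
  proof -
    have "monom f i = (\<Sum>n\<le>degree f. smult [:c n:] (monom ([:\<eta>1, \<xi>1:] ^ n) i))"
      by (subst poly_as_sum_of_linear_powers[OF \<xi>1_nonzero, of f \<eta>1])
         (simp add: c_def monom_sum monom_smult_const)
    then show ?thesis
      by (simp add: q_def phi_sum phi_smult phi_basis monom_sum monom_smult_const)
  qed
  then show ?thesis by blast
qed

definition psi :: "complex poly \<Rightarrow> complex poly" where
  "psi f = coeff (\<phi> (monom f 0)) 0"

lemma phi_monom: "\<phi> (monom f i) = monom (psi f) i"
proof -
  obtain q where "\<And>i. \<phi> (monom f i) = monom q i" using phi_monom_exists by blast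
  then show ?thesis unfolding psi_def by simp
qed

lemma psi_add: "psi (f + g) = psi f + psi g"
  unfolding psi_def by (simp add: add_monom[symmetric] phi_add)

lemma psi_smult: "psi (smult c f) = smult c (psi f)"
  unfolding psi_def by (simp add: monom_smult_const phi_smult)

lemma psi_0: "psi 0 = 0"
  using psi_add[of 0 0] by simp

lemma psi_diff: "psi (f - g) = psi f - psi g"
  using psi_add[of "f - g" g] by (simp add: algebra_simps)

lemma psi_gpoly: "psi (gpoly 0 n [:\<eta>1, \<xi>1:]) = gpoly (\<eta>2 - \<eta>1) n [:\<eta>2, \<xi>2:]"
  using phi_monom[of "[:\<eta>1, \<xi>1:] ^ n" 0] phi_basis[of n 0] by (simp add: gpoly_0_param)

lemma coeff_phi: "coeff (\<phi> P) i = psi (coeff P i)"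
proof -
  have "\<phi> P = (\<Sum>j\<le>degree P. monom (psi (coeff P j)) j)"
    by (subst poly_as_sum_of_monoms[of P, symmetric]) (simp add: phi_sum phi_monom)
  then show ?thesis
    by (auto simp add: coeff_sum coeff_monom psi_0 coeff_eq_0)
qed

text \<open>Not a rewrite rule: psi is defined in terms of \<phi>, so rewriting with it loops.\<close>

lemma phi_eq_map_poly: "\<phi> = map_poly psi"
  by (intro ext poly_eqI) (simp add: coeff_phi coeff_map_poly psi_0)

lemma psi_opF:
  assumes "\<alpha>1 * \<xi>1 = \<alpha>2 * \<xi>2"
  shows "psi (smult \<alpha>1 (opF \<alpha>1 [:\<eta>1, \<xi>1:] f)) = smult \<alpha>2 (opF \<alpha>2 [:\<eta>2, \<xi>2:] (psi f))"
proof (rule linear_maps_eq_on_linear_powers[OF \<xi>1_nonzero,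
      where L = "\<lambda>f. psi (smult \<alpha>1 (opF \<alpha>1 [:\<eta>1, \<xi>1:] f))"
        and M = "\<lambda>f. smult \<alpha>2 (opF \<alpha>2 [:\<eta>2, \<xi>2:] (psi f))"])
  fix n
  show "psi (smult \<alpha>1 (opF \<alpha>1 [:\<eta>1, \<xi>1:] ([:\<eta>1, \<xi>1:] ^ n)))
      = smult \<alpha>2 (opF \<alpha>2 [:\<eta>2, \<xi>2:] (psi ([:\<eta>1, \<xi>1:] ^ n)))"
    unfolding gpoly_0_param[symmetric]
    by (simp add: opF_gpoly_linear psi_smult psi_diff psi_gpoly assms)
qed (simp_all add: opF_add opF_smult psi_add psi_smult smult_add_right mult.commute)

lemma psi_opG:
  assumes "\<alpha>1 * \<xi>1 = \<alpha>2 * \<xi>2"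
  shows "psi (opG \<alpha>1 [:\<eta>1, \<xi>1:] f) = opG \<alpha>2 [:\<eta>2, \<xi>2:] (psi f)"
proof (rule linear_maps_eq_on_linear_powers[OF \<xi>1_nonzero,
      where L = "\<lambda>f. psi (opG \<alpha>1 [:\<eta>1, \<xi>1:] f)" and M = "\<lambda>f. opG \<alpha>2 [:\<eta>2, \<xi>2:] (psi f)"])
  fix n
  show "psi (opG \<alpha>1 [:\<eta>1, \<xi>1:] ([:\<eta>1, \<xi>1:] ^ n)) = opG \<alpha>2 [:\<eta>2, \<xi>2:] (psi ([:\<eta>1, \<xi>1:] ^ n))"
    unfolding gpoly_0_param[symmetric]
    by (simp add: opG_gpoly_linear psi_add psi_smult psi_gpoly assms)
qed (simp_all add: opG_add opG_smult psi_add psi_smult)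

lemma phi_pCons: "\<phi> (pCons f P) = pCons (psi f) (\<phi> P)"
  by (rule poly_eqI) (simp add: coeff_phi coeff_pCons split: nat.split)

lemma phi_0: "\<phi> 0 = 0"
  using phi_add[of 0 0] by simp

lemma phi_mult_shift_power:
  "\<phi> (pCons (- [:a:]) 1 ^ i * P) = pCons (- [:a:]) 1 ^ i * \<phi> P"
proof (induction i arbitrary: P)
  case (Suc i)
  have "pCons (- [:a:]) 1 ^ Suc i * P = smult [:- a:] (pCons (- [:a:]) 1 ^ i * P) + pCons 0 (pCons (- [:a:]) 1 ^ i * P)"
    by (simp add: algebra_simps)
  then show ?case
    by (simp only: phi_add phi_smult phi_pCons psi_0 Suc.IH) (simp add: algebra_simps)
qed simp

lemma phi_omega_mono:
  assumes "\<alpha>1 * \<xi>1 = \<alpha>2 * \<xi>2"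
  shows "\<phi> (omega_mono lam \<alpha>1 [:\<eta>1, \<xi>1:] m f i) = omega_mono lam \<alpha>2 [:\<eta>2, \<xi>2:] m (psi f) i"
proof -
  have "psi (smult (of_int m) (opG \<alpha>1 [:\<eta>1, \<xi>1:] f) - smult (of_int m ^ 2 * \<alpha>1) (opF \<alpha>1 [:\<eta>1, \<xi>1:] f))
      = smult (of_int m) (opG \<alpha>2 [:\<eta>2, \<xi>2:] (psi f)) - smult (of_int m ^ 2 * \<alpha>2) (opF \<alpha>2 [:\<eta>2, \<xi>2:] (psi f))"
    using psi_opF[OF assms, of f] psi_opG[OF assms, of f]
    by (simp add: psi_diff psi_smult smult_smult[symmetric] del: smult_smult)
  then show ?thesis
    unfolding omega_mono_def
    by (simp only: phi_smult phi_mult_shift_power phi_pCons phi_0 psi_0)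
qed

lemma psi_nonzero:
  assumes "f \<noteq> 0"
  shows "psi f \<noteq> 0"
proof -
  define N where "N = degree f"
  define F where "F = pcompose f [:- \<eta>1 / \<xi>1, 1 / \<xi>1:]"
  have f_expansion: "f = (\<Sum>n\<le>N. smult (coeff F n) (gpoly 0 n [:\<eta>1, \<xi>1:]))"
    unfolding N_def F_def gpoly_0_param by (rule poly_as_sum_of_linear_powers[OF \<xi>1_nonzero])
  have "degree F = N"
    unfolding F_def N_def using \<xi>1_nonzero by (simp add: degree_pcompose)
  moreover have "F \<noteq> 0" using f_expansion assms by auto
  ultimately have "coeff F N \<noteq> 0" by auto
  have "coeff (psi f) N = (\<Sum>n\<le>N. coeff F n * coeff (gpoly (\<eta>2 - \<eta>1) n [:\<eta>2, \<xi>2:]) N)"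
    by (subst f_expansion) (simp add: additive_sum[OF psi_add] psi_smult psi_gpoly coeff_sum)
  also have "\<dots> = coeff F N * \<xi>2 ^ N"
    by (subst sum.remove[of _ N]) (auto simp: lead_coeff_gpoly_linear \<xi>2_nonzero
        degree_gpoly_linear coeff_eq_0 intro!: sum.neutral)
  finally show ?thesis
    using \<open>coeff F N \<noteq> 0\<close> \<xi>2_nonzero by auto
qed

lemma psi_surj: "surj psi"
proof -
  have "q \<in> range psi" if "degree q \<le> N" for q N
    using that
  proof (induction N arbitrary: q)
    case 0
    then have "q = [:coeff q 0:]" by (simp add: degree_0_id)
    also have "\<dots> = psi (smult (coeff q 0) (gpoly 0 0 [:\<eta>1, \<xi>1:]))"
      using psi_smult[of "coeff q 0" 1] psi_gpoly[of 0] by (simp add: gpoly_0_param)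
    finally show ?case by blast
  next
    case (Suc N)
    define c where "c = coeff q (Suc N) / \<xi>2 ^ Suc N"
    define q' where "q' = q - smult c (gpoly (\<eta>2 - \<eta>1) (Suc N) [:\<eta>2, \<xi>2:])"
    have "coeff q' i = 0" if "N < i" for i
    proof (cases "i = Suc N")
      case True
      then show ?thesis using \<xi>2_nonzero by (simp add: q'_def c_def lead_coeff_gpoly_linear)
    next
      case False
      with that Suc.prems \<xi>2_nonzero show ?thesis
        by (simp add: q'_def coeff_eq_0 degree_gpoly_linear)
    qed
    then have "degree q' \<le> N" by (simp add: degree_le)
    then obtain f' where "q' = psi f'" using Suc.IH by blast
    then have "q = psi (f' + smult c (gpoly 0 (Suc N) [:\<eta>1, \<xi>1:]))"
      by (simp add: q'_def psi_add psi_smult psi_gpoly diff_eq_eq)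
    then show ?case by blast
  qed
  then show ?thesis by blast
qed

lemma psi_bij: "bij psi"
proof (rule bijI[OF injI psi_surj])
  fix f g
  assume "psi f = psi g"
  then have "psi (f - g) = 0" by (simp add: psi_diff)
  then show "f = g" using psi_nonzero[of "f - g"] by auto
qed

lemma degree_phi: "degree (\<phi> P) = degree P"
proof -
  have "degree (map_poly psi P) = degree P"
    by (rule degree_map_poly) (rule psi_nonzero)
  then show ?thesis by (subst phi_eq_map_poly)
qed

lemma phi_omega_act:
  assumes "\<alpha>1 * \<xi>1 = \<alpha>2 * \<xi>2"
  shows "\<phi> (omega_act lam \<alpha>1 [:\<eta>1, \<xi>1:] m P) = omega_act lam \<alpha>2 [:\<eta>2, \<xi>2:] m (\<phi> P)"
  unfolding omega_act_def phi_sum by (simp add: phi_omega_mono[OF assms] degree_phi coeff_phi)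

lemma phi_bij: "bij \<phi>"
  by (subst phi_eq_map_poly) (rule bij_map_poly[OF psi_bij psi_0])

end

theorem lemma3p3:
  fixes lam \<alpha>1 \<alpha>2 \<xi>1 \<eta>1 \<xi>2 \<eta>2 :: complex
    and \<phi> :: "complex poly poly \<Rightarrow> complex poly poly"
  assumes "lam \<noteq> 0" and "\<alpha>1 \<noteq> 0" and "\<alpha>2 \<noteq> 0"
    and "\<alpha>1 * \<xi>1 = \<alpha>2 * \<xi>2" and "\<alpha>1 * \<xi>1 \<noteq> 0"
    and add: "\<And>P Q. \<phi> (P + Q) = \<phi> P + \<phi> Q"
    and scal: "\<And>c P. \<phi> (smult [:c:] P) = smult [:c:] (\<phi> P)"
    and basis: "\<And>n i. \<phi> (monom ([:\<eta>1, \<xi>1:] ^ n) i)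
                       = monom (gpoly (\<eta>2 - \<eta>1) n [:\<eta>2, \<xi>2:]) i"
  shows "bij \<phi> \<and>
         (\<forall>m P. \<phi> (omega_act lam \<alpha>1 [:\<eta>1, \<xi>1:] m P)
                 = omega_act lam \<alpha>2 [:\<eta>2, \<xi>2:] m (\<phi> P))"
proof -
  have \<xi>1: "\<xi>1 \<noteq> 0" and \<xi>2: "\<xi>2 \<noteq> 0"
    using assms(4,5) by auto
  show ?thesis
    using phi_bij[OF add scal basis \<xi>1 \<xi>2] phi_omega_act[OF add scal basis \<xi>1 \<xi>2 assms(4)]
    by blast
qed

end
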